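(* Let $a_1,\dots,a_8$ be pairwise distinct positive reals and let $$\mathscr H_{\mathrm{small}}=\{P^{(0)}_1(a_i): i=1,\dots,4\}\cup\{P^{(1)}_2(a_i,0): i=5,\dots,8\}.$$ If the simple one-layer GNN with parameters $w_2,W_{11},W_{12},b_1,b_2$ satisfies $h^{(1)}_u(G)=x_u(\Gamma(G))$ for every $G\in\mathscr H_{\mathrm{small}}$ and every $u\in V(G)$, then $w_2W_{11}=w_2W_{12}=1$ and $w_2b_1+b_2=0$.
   Context: Attributed graphs: $G=(V,E,X_{\mathrm v},X_{\mathrm e})$ with $V$ finite, $E$ a set of undirected edges, nonnegative edge weights $x_{(u,v)}=x_{(v,u)}\ge 0$ and nonnegative real node features $x_v$. Every node carries a self-loop of weight $x_{(v,v)}=0$, and $\mathcal N(v)=\{v\}\cup\{u:\{u,v\}\in E\}$. A constant $\beta>0$ (larger than all sums of edge weights considered) encodes "infinite distance". $x_v(H)$ denotes the feature of node $v$ in graph $H$. The Bellman–Ford operator $\Gamma$ sends $G$ to the graph with the same vertices, edges and edge weights and node features $x'_v=\min\{x_u+x_{(u,v)}:u\in\mathcal N(v)\}$. For a source $s$, $\mathrm d^{(t)}(s,v)$ is the minimal total weight of a walk from $s$ to $v$ with at most $t$ edges, or $\beta$ if none exists. $P^{(t)}_k(a_1,\dots,a_k)$ is the path graph with vertices $v_0,\dots,v_k$, edges $\{v_{i-1},v_i\}$ of weight $a_i$, and node features $x_{v_i}=\mathrm d^{(t)}(v_0,v_i)$. Simple one-layer GNN: with $\sigma(z)=\max(z,0)$,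 $$h^{(1)}_v(G)=\sigma\Big(w_2\min_{u\in\mathcal N(v)}\sigma\big(W_{11}x_u+W_{12}x_{(u,v)}+b_1\big)+b_2\Big).$$ *)

theory Defs
  imports Main "HOL.Real"
begin

text \<open>Attributed graphs with natural-number vertices, undirected edges (2-element sets),
  edge weights (symmetric) and real node features.\<close>
record agraph =
  verts :: "nat set"
  edges :: "nat set set"
  ew    :: "nat \<Rightarrow> nat \<Rightarrow> real"
  nf    :: "nat \<Rightarrow> real"

definition wt :: "agraph \<Rightarrow> nat \<Rightarrow> nat \<Rightarrow> real" where
  "wt G u v = (if u = v then 0 else ew G u v)"

definition nbhd :: "agraph \<Rightarrow> nat \<Rightarrow> nat set" where
  "nbhd G v = {v} \<union> {u. {u, v} \<in> edges G}"

definition BF :: "agraph \<Rightarrow> agraph" where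
  "BF G = G\<lparr>nf := (\<lambda>v. Min ((\<lambda>u. nf G u + wt G u v) ` nbhd G v))\<rparr>"

definition is_walk :: "agraph \<Rightarrow> nat list \<Rightarrow> bool" where
  "is_walk G ps \<longleftrightarrow> ps \<noteq> [] \<and> set ps \<subseteq> verts G \<and>
     (\<forall>i. Suc i < length ps \<longrightarrow> {ps ! i, ps ! Suc i} \<in> edges G)"

definition walk_weight :: "agraph \<Rightarrow> nat list \<Rightarrow> real" where
  "walk_weight G ps = (\<Sum>i<length ps - 1. ew G (ps ! i) (ps ! Suc i))"

definition walks_le :: "agraph \<Rightarrow> nat \<Rightarrow> nat \<Rightarrow> nat \<Rightarrow> nat list set" where
  "walks_le G t s v = {ps. is_walk G ps \<and> hd ps = s \<and> last ps = v \<and> length ps \<le> Suc t}"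

text \<open>d^(t)(s,v), with beta encoding infinite distance.\<close>
definition dist :: "real \<Rightarrow> nat \<Rightarrow> agraph \<Rightarrow> nat \<Rightarrow> nat \<Rightarrow> real" where
  "dist \<beta> t G s v = (if walks_le G t s v = {} then \<beta>
                      else Min (walk_weight G ` walks_le G t s v))"

text \<open>Underlying path graph on v_0..v_k (vertex i = v_i) with edge {v_(i-1), v_i} of
  weight as!(i-1), where k = length as; node features are placeholders.\<close>
definition path_base :: "real list \<Rightarrow> agraph" where
  "path_base as = \<lparr> verts = {0..length as},
      edges = {{i, Suc i} | i. i < length as},
      ew = (\<lambda>u v. if v = Suc u \<and> u < length as then as ! u
                  else if u = Suc v \<and> v < length as then as ! v else 0),
      nf = (\<lambda>_. 0) \<rparr>"

definition path_graph :: "real \<Rightarrow> nat \<Rightarrow> real list \<Rightarrow> agraph" where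
  "path_graph \<beta> t as = (path_base as)\<lparr>nf := (\<lambda>v. dist \<beta> t (path_base as) 0 v)\<rparr>"

definition relu :: "real \<Rightarrow> real" where
  "relu z = max z 0"

definition gnn1 :: "real \<Rightarrow> real \<Rightarrow> real \<Rightarrow> real \<Rightarrow> real \<Rightarrow> agraph \<Rightarrow> nat \<Rightarrow> real" where
  "gnn1 w2 W11 W12 b1 b2 G v =
     relu (w2 * Min ((\<lambda>u. relu (W11 * nf G u + W12 * wt G u v + b1)) ` nbhd G v) + b2)"

end

theory Submission imports Defs begin

text \<open>At the far end v of either path the neighbourhood is {u, v} with x_v = \<beta>, so the GNN
  computes t \<mapsto> relu (w2 * min (relu (K t + b1)) c + b2) with c = relu (W11 \<beta> + b1), where
  K = W12 on P^(0)_1(t) and K = W11 on P^(1)_2(t, 0), while Bellman-Ford returns t. Outside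
  the window where 0 < K t + b1 < c this map takes only two values, so among four distinct
  fixed points two lie in the window, where it is the affine map t \<mapsto> w2 (K t + b1) + b2;
  agreeing with the identity at two points forces w2 K = 1 and w2 b1 + b2 = 0.\<close>

lemma walks_le_zero_self:
  assumes "s \<in> verts G"
  shows "walks_le G 0 s s = {[s]}"
proof -
  have "ps = [s]" if "ps \<noteq> []" "length ps \<le> Suc 0" "hd ps = s" for ps :: "nat list"
    using that by (cases ps) auto
  then show ?thesis
    using assms unfolding walks_le_def is_walk_def by auto
qed

lemma dist_zero_self:
  assumes "s \<in> verts G"
  shows "dist \<beta> 0 G s s = 0"
  using assms by (simp add: dist_def walks_le_zero_self walk_weight_def)

lemma walks_le_one_edge:
  assumes "s \<noteq> v" "s \<in> verts G" "v \<in> verts G" "{s, v} \<in> edges G"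
  shows "walks_le G 1 s v = {[s, v]}"
proof (intro set_eqI iffI)
  fix ps assume "ps \<in> walks_le G 1 s v"
  then have "ps \<noteq> []" "length ps \<le> 2" "hd ps = s" "last ps = v"
    unfolding walks_le_def is_walk_def by auto
  then show "ps \<in> {[s, v]}"
    using \<open>s \<noteq> v\<close> by (cases ps; cases "tl ps") auto
next
  fix ps assume "ps \<in> {[s, v]}"
  then show "ps \<in> walks_le G 1 s v"
    using assms unfolding walks_le_def is_walk_def by (auto simp: less_Suc_eq)
qed

lemma dist_one_edge:
  assumes "s \<noteq> v" "s \<in> verts G" "v \<in> verts G" "{s, v} \<in> edges G"
  shows "dist \<beta> 1 G s v = ew G s v"
  unfolding dist_def walks_le_one_edge[OF assms] by (simp add: walk_weight_def)

lemma path_base_edge_le_Suc: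
  assumes "{u, v} \<in> edges (path_base as)"
  shows "v \<le> Suc u"
  using assms unfolding path_base_def by (auto simp: doubleton_eq_iff)

text \<open>Each edge of a path graph advances by at most one vertex, so a walk with at most
  t edges from v_0 cannot reach v_i for i > t.\<close>
lemma path_base_walk_last_le:
  assumes "is_walk (path_base as) ps"
  shows "last ps \<le> hd ps + (length ps - 1)"
proof -
  have "ps ! i \<le> hd ps + i" if "i < length ps" for i
    using that
  proof (induction i)
    case 0
    then show ?case by (simp add: hd_conv_nth)
  next
    case (Suc i)
    then have "{ps ! i, ps ! Suc i} \<in> edges (path_base as)"
      using assms by (simp add: is_walk_def)
    then show ?case
      using Suc path_base_edge_le_Suc by fastforce
  qed
  moreover have "ps \<noteq> []" using assms by (simp add: is_walk_def)
  ultimately show ?thesis by (simp add: last_conv_nth)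
qed

lemma dist_path_base_unreachable:
  assumes "t < v"
  shows "dist \<beta> t (path_base as) 0 v = \<beta>"
proof -
  have "walks_le (path_base as) t 0 v = {}"
    using path_base_walk_last_le assms unfolding walks_le_def by fastforce
  then show ?thesis by (simp add: dist_def)
qed

lemma gnn1_two_neighbours:
  assumes "nbhd G v = {u, v}"
  shows "gnn1 w2 W11 W12 b1 b2 G v =
    relu (w2 * min (relu (W11 * nf G u + W12 * wt G u v + b1)) (relu (W11 * nf G v + b1)) + b2)"
  using assms by (simp add: gnn1_def wt_def)

lemma BF_two_neighbours:
  assumes "nbhd G v = {u, v}"
  shows "nf (BF G) v = min (nf G u + wt G u v) (nf G v)"
  using assms by (simp add: BF_def wt_def)

lemma path_graph_simps [simp]:
  "verts (path_graph \<beta> t as) = {0..length as}"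
  "nbhd (path_graph \<beta> t as) v = nbhd (path_base as) v"
  "wt (path_graph \<beta> t as) u v = wt (path_base as) u v"
  "nf (path_graph \<beta> t as) v = dist \<beta> t (path_base as) 0 v"
  by (simp_all add: path_graph_def path_base_def nbhd_def wt_def)

lemma path_base_one:
  "verts (path_base [x]) = {0, 1}"
  "nbhd (path_base [x]) 1 = {0, 1}"
  "wt (path_base [x]) 0 1 = x"
  by (auto simp: path_base_def nbhd_def wt_def doubleton_eq_iff)

lemma path_base_two:
  "verts (path_base [x, y]) = {0, 1, 2}"
  "edges (path_base [x, y]) = {{0, 1}, {1, 2}}"
  "nbhd (path_base [x, y]) 2 = {1, 2}"
  "ew (path_base [x, y]) 0 1 = x"
  "wt (path_base [x, y]) 1 2 = y"
  by (auto simp: path_base_def nbhd_def wt_def doubleton_eq_iff less_Suc_eq)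

text \<open>On P^(0)_1(x) the far end sees its neighbour at distance 0 across an edge of weight x,
  and itself at distance \<beta>.\<close>
lemma gnn1_path_one_edge:
  "gnn1 w2 W11 W12 b1 b2 (path_graph \<beta> 0 [x]) 1 =
     relu (w2 * min (relu (W12 * x + b1)) (relu (W11 * \<beta> + b1)) + b2)"
  "x \<le> \<beta> \<Longrightarrow> nf (BF (path_graph \<beta> 0 [x])) 1 = x"
proof -
  let ?G = "path_graph \<beta> 0 [x]"
  have nb: "nbhd ?G 1 = {0, 1}" using path_base_one(2) by simp
  have u: "nf ?G 0 = 0" by (simp add: dist_zero_self path_base_one)
  have v: "nf ?G 1 = \<beta>" by (simp add: dist_path_base_unreachable)
  have w: "wt ?G 0 1 = x" using path_base_one(3) by simp
  show "gnn1 w2 W11 W12 b1 b2 ?G 1 =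
      relu (w2 * min (relu (W12 * x + b1)) (relu (W11 * \<beta> + b1)) + b2)"
    unfolding gnn1_two_neighbours[OF nb] u v w by simp
  show "x \<le> \<beta> \<Longrightarrow> nf (BF ?G) 1 = x"
    unfolding BF_two_neighbours[OF nb] u v w by simp
qed

text \<open>On P^(1)_2(x, 0) the far end sees its neighbour at distance x across an edge of weight 0,
  and itself at distance \<beta>.\<close>
lemma gnn1_path_two_edges:
  "gnn1 w2 W11 W12 b1 b2 (path_graph \<beta> 1 [x, 0]) 2 =
     relu (w2 * min (relu (W11 * x + b1)) (relu (W11 * \<beta> + b1)) + b2)"
  "x \<le> \<beta> \<Longrightarrow> nf (BF (path_graph \<beta> 1 [x, 0])) 2 = x"
proof -
  let ?G = "path_graph \<beta> 1 [x, 0]"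
  have nb: "nbhd ?G 2 = {1, 2}" using path_base_two(3) by simp
  have "nf ?G 1 = dist \<beta> 1 (path_base [x, 0]) 0 1" by simp
  also have "\<dots> = x" by (subst dist_one_edge) (use path_base_two in simp_all)
  finally have u: "nf ?G 1 = x" .
  have v: "nf ?G 2 = \<beta>" by (simp add: dist_path_base_unreachable)
  have w: "wt ?G 1 2 = 0" using path_base_two(5) by simp
  show "gnn1 w2 W11 W12 b1 b2 ?G 2 =
      relu (w2 * min (relu (W11 * x + b1)) (relu (W11 * \<beta> + b1)) + b2)"
    unfolding gnn1_two_neighbours[OF nb] u v w by simp
  show "x \<le> \<beta> \<Longrightarrow> nf (BF ?G) 2 = x"
    unfolding BF_two_neighbours[OF nb] u v w by simp
qed

lemma affine_fit_two_points:
  fixes w K b d x y :: real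
  assumes "w * (K * x + b) + d = x" "w * (K * y + b) + d = y" "x \<noteq> y"
  shows "w * K = 1 \<and> w * b + d = 0"
proof -
  have "(w * K - 1) * (x - y) = 0"
    using assms(1,2) by (simp add: algebra_simps)
  then have "w * K = 1" using assms(3) by simp
  moreover have "(w * K) * x + (w * b + d) = x" using assms(1) by (simp add: algebra_simps)
  ultimately show ?thesis by simp
qed

text \<open>Outside the window 0 < K t + b < c the clipped term min (relu (K t + b)) c is 0 or c,
  so at most two fixed points lie there and at least two lie inside, where the map is affine.\<close>
lemma clipped_relu_fixed_points_affine:
  fixes T :: "real set" and w K b c d :: real
  assumes "finite T" "card T \<ge> 4" "\<forall>t\<in>T. t > 0"
    and fixed: "\<forall>t\<in>T. relu (w * min (relu (K * t + b)) c + d) = t"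
  shows "w * K = 1 \<and> w * b + d = 0"
proof -
  define S where "S = {t \<in> T. 0 < K * t + b \<and> K * t + b < c}"
  have "T - S \<subseteq> (\<lambda>m. relu (w * m + d)) ` {0, c}"
  proof
    fix t assume "t \<in> T - S"
    then have "min (relu (K * t + b)) c \<in> {0, c}"
      by (auto simp: S_def relu_def)
    moreover have "t = relu (w * min (relu (K * t + b)) c + d)"
      using fixed \<open>t \<in> T - S\<close> by simp
    ultimately show "t \<in> (\<lambda>m. relu (w * m + d)) ` {0, c}"
      by (rule rev_image_eqI)
  qed
  then have "card (T - S) \<le> card ((\<lambda>m. relu (w * m + d)) ` {0, c})"
    by (simp add: card_mono)
  also have "\<dots> \<le> 2"
    by (rule order_trans[OF card_image_le]) (simp_all add: card_insert_if)
  finally have "card (T - S) \<le> 2" .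
  moreover have "card T \<le> card S + card (T - S)"
    using card_Un_le[of S "T - S"] by (simp add: Un_absorb1 S_def)
  ultimately have "card S \<ge> 2" using assms(2) by linarith
  then obtain x y where xy: "x \<in> S" "y \<in> S" "x \<noteq> y"
    by (auto simp: numeral_2_eq_2 card_le_Suc_iff)
  have "w * (K * t + b) + d = t" if "t \<in> S" for t
    using that fixed assms(3) by (auto simp: S_def relu_def max_def split: if_splits)
  then show ?thesis
    using affine_fit_two_points xy by blast
qed

theorem mainTheorem2:
  fixes a :: "nat \<Rightarrow> real" and \<beta> w2 W11 W12 b1 b2 :: real
  assumes distinct: "inj_on a {1..8}"
    and pos: "\<forall>i\<in>{1..8}. a i > 0"
    and beta_pos: "\<beta> > 0"
    and beta_large: "\<forall>i\<in>{1..8}. a i < \<beta>"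
    and fit: "\<forall>G \<in> {path_graph \<beta> 0 [a i] | i. i \<in> {1..4}}
                 \<union> {path_graph \<beta> 1 [a i, 0] | i. i \<in> {5..8}}.
               \<forall>u \<in> verts G. gnn1 w2 W11 W12 b1 b2 G u = nf (BF G) u"
  shows "w2 * W11 = 1 \<and> w2 * W12 = 1 \<and> w2 * b1 + b2 = 0"
proof -
  define c where "c = relu (W11 * \<beta> + b1)"
  have one_edge: "\<forall>t \<in> a ` {1..4}. relu (w2 * min (relu (W12 * t + b1)) c + b2) = t"
  proof
    fix t assume "t \<in> a ` {1..4}"
    then obtain i where i: "i \<in> {1..4}" "t = a i" by blast
    then have "path_graph \<beta> 0 [t] \<in> {path_graph \<beta> 0 [a i] | i. i \<in> {1..4}}" by blast
    then have "gnn1 w2 W11 W12 b1 b2 (path_graph \<beta> 0 [t]) 1 = nf (BF (path_graph \<beta> 0 [t])) 1"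
      using fit by simp
    moreover have "t \<le> \<beta>" using beta_large i by (simp add: less_imp_le)
    ultimately show "relu (w2 * min (relu (W12 * t + b1)) c + b2) = t"
      using gnn1_path_one_edge[where x = t] by (simp add: c_def)
  qed
  have two_edges: "\<forall>t \<in> a ` {5..8}. relu (w2 * min (relu (W11 * t + b1)) c + b2) = t"
  proof
    fix t assume "t \<in> a ` {5..8}"
    then obtain i where i: "i \<in> {5..8}" "t = a i" by blast
    then have "path_graph \<beta> 1 [t, 0] \<in> {path_graph \<beta> 1 [a i, 0] | i. i \<in> {5..8}}" by blast
    then have "gnn1 w2 W11 W12 b1 b2 (path_graph \<beta> 1 [t, 0]) 2 = nf (BF (path_graph \<beta> 1 [t, 0])) 2"
      using fit by simp
    moreover have "t \<le> \<beta>" using beta_large i by (simp add: less_imp_le)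
    ultimately show "relu (w2 * min (relu (W11 * t + b1)) c + b2) = t"
      using gnn1_path_two_edges[where x = t] by (simp add: c_def)
  qed
  have "card (a ` {1..4}) = 4" "card (a ` {5..8}) = 4"
    by (simp_all add: card_image inj_on_subset[OF distinct])
  moreover have "\<forall>t \<in> a ` {1..4}. t > 0" "\<forall>t \<in> a ` {5..8}. t > 0"
    using pos by auto
  ultimately have "w2 * W12 = 1 \<and> w2 * b1 + b2 = 0" "w2 * W11 = 1 \<and> w2 * b1 + b2 = 0"
    using clipped_relu_fixed_points_affine[OF _ _ _ one_edge]
      clipped_relu_fixed_points_affine[OF _ _ _ two_edges] by simp_all
  then show ?thesis by simp
qed

end
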